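(* Let $\mathcal{X}\subset\mathbb{R}^n$ be closed convex, let $\mathcal{S}$ be a set, and for each $s$ let $f(\cdot;s):\mathbb{R}^n\to\mathbb{R}$ be convex and subdifferentiable on $\mathcal{X}$. For each $x\in\mathcal{X}$ and $s\in\mathcal{S}$ let $f_x(\cdot;s)$ satisfy (C.i) $y\mapsto f_x(y;s)$ is convex and subdifferentiable on $\mathcal{X}$, and (C.ii) $f_x(x;s)=f(x;s)$ and $f_x(y;s)\le f(y;s)$ for all $y$. Given $x_k\in\mathcal{X}$, $S_k\in\mathcal{S}$, $\alpha_k>0$, let $x_{k+1}=\arg\min_{x\in\mathcal{X}}\{f_{x_k}(x;S_k)+\frac{1}{2\alpha_k}\|x-x_k\|_2^2\}$. Then $\|x_k-x_{k+1}\|_2\le\alpha_k\|f'(x_k;S_k)\|_2$ for some $f'(x_k;S_k)\in\partial f(x_k;S_k)$. *)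

theory Defs
  imports "HOL-Analysis.Analysis"
begin

definition is_subgradient :: "('a::real_inner \<Rightarrow> real) \<Rightarrow> 'a \<Rightarrow> 'a \<Rightarrow> bool" where
  "is_subgradient h x g \<longleftrightarrow> (\<forall>y. h y \<ge> h x + inner g (y - x))"

definition subdifferentiable_on :: "('a::real_inner \<Rightarrow> real) \<Rightarrow> 'a set \<Rightarrow> bool" where
  "subdifferentiable_on h X \<longleftrightarrow> (\<forall>x\<in>X. \<exists>g. is_subgradient h x g)"

end

theory Submission
  imports Defs
begin

text \<open>
  A subgradient h of the model m = fm xk Sk at xk is also a subgradient of f(\<cdot>; Sk) at xk,
  because the model touches f from below at xk.  Comparing the proximal objective at its
  minimiser p = xk1 with its values on the segment from p towards xk, and letting the point
  tend to p, convexity of m yields m p + \<parallel>p - xk\<parallel>^2 / \<alpha> \<le> m xk.  Together with the subgradient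
  inequality m p \<ge> m xk + \<langle>h, p - xk\<rangle> and Cauchy-Schwarz this gives \<parallel>xk - p\<parallel> \<le> \<alpha> \<parallel>h\<parallel>.
\<close>

lemma is_subgradient_of_minorant:
  assumes "is_subgradient m x h" and "m x = F x" and "\<And>y. m y \<le> F y"
  shows "is_subgradient F x h"
  using assms unfolding is_subgradient_def by (metis order_trans)

lemma convex_prox_minimizer_descent:
  fixes m :: "'a::real_normed_vector \<Rightarrow> real"
  assumes "convex X" and "convex_on X m" and "x \<in> X" and "p \<in> X"
    and min: "\<And>z. z \<in> X \<Longrightarrow> m p + c * (norm (p - x))\<^sup>2 \<le> m z + c * (norm (z - x))\<^sup>2"
  shows "m p + 2 * c * (norm (p - x))\<^sup>2 \<le> m x"
proof -
  define D where "D = (norm (p - x))\<^sup>2"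
  have segment: "m p + c * D * (2 - t) \<le> m x" if t: "0 < t" "t \<le> 1" for t
  proof -
    define z where "z = (1 - t) *\<^sub>R p + t *\<^sub>R x"
    have "z \<in> X"
      using assms(1,3,4) t unfolding z_def by (simp add: convexD)
    moreover have "z - x = (1 - t) *\<^sub>R (p - x)"
      unfolding z_def by (simp add: algebra_simps)
    ultimately have "m p + c * D \<le> m z + c * ((1 - t)\<^sup>2 * D)"
      using min[of z] unfolding D_def by (simp add: power_mult_distrib)
    moreover have "m z \<le> (1 - t) * m p + t * m x"
      using convex_onD[OF assms(2), of t p x] t assms(3,4) by (simp add: z_def)
    ultimately have "t * (m p + c * D * (2 - t)) \<le> t * m x"
      by (simp add: algebra_simps power2_eq_square)
    then show ?thesis
      using t by simp
  qed
  have "((\<lambda>t. m p + c * D * (2 - t)) \<longlongrightarrow> m p + c * D * (2 - 0)) (at_right 0)"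
    by (intro tendsto_intros)
  moreover have "\<forall>\<^sub>F t in at_right 0. m p + c * D * (2 - t) \<le> m x"
    using eventually_at_right_real[OF zero_less_one] by eventually_elim (simp add: segment)
  ultimately have "m p + c * D * (2 - 0) \<le> m x"
    by (rule tendsto_upperbound) simp
  then show ?thesis
    unfolding D_def by (simp add: algebra_simps)
qed

lemma prox_step_le_subgradient_norm:
  fixes m :: "'a::real_inner \<Rightarrow> real"
  assumes "convex X" and "convex_on X m" and "x \<in> X" and "p \<in> X" and "\<alpha> > 0"
    and "is_subgradient m x h"
    and "\<And>z. z \<in> X \<Longrightarrow>
           m p + (1 / (2 * \<alpha>)) * (norm (p - x))\<^sup>2 \<le> m z + (1 / (2 * \<alpha>)) * (norm (z - x))\<^sup>2"
  shows "norm (x - p) \<le> \<alpha> * norm h"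
proof -
  define d where "d = x - p"
  have "m p + (norm d)\<^sup>2 / \<alpha> \<le> m x"
    using convex_prox_minimizer_descent[OF assms(1-4,7)] \<open>\<alpha> > 0\<close>
    unfolding d_def by (simp add: norm_minus_commute)
  moreover have "m p \<ge> m x - inner h d"
    using assms(6) unfolding is_subgradient_def d_def
    by (metis diff_conv_add_uminus inner_minus_right minus_diff_eq)
  ultimately have "(norm d)\<^sup>2 / \<alpha> \<le> norm h * norm d"
    using norm_cauchy_schwarz[of h d] by linarith
  then have "norm d * norm d \<le> (\<alpha> * norm h) * norm d"
    using \<open>\<alpha> > 0\<close> by (simp add: divide_le_eq power2_eq_square algebra_simps)
  then show ?thesis
    unfolding d_def by (cases "norm (x - p) = 0") (use \<open>\<alpha> > 0\<close> in auto)
qed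

theorem lemma12:
  fixes X :: "(real ^ 'n) set"
    and S :: "'s set"
    and f :: "real ^ 'n \<Rightarrow> 's \<Rightarrow> real"
    and fm :: "real ^ 'n \<Rightarrow> 's \<Rightarrow> real ^ 'n \<Rightarrow> real"
    and xk xk1 :: "real ^ 'n"
    and Sk :: 's
    and \<alpha> :: real
  assumes "closed X" and "convex X"
    and "\<And>s. s \<in> S \<Longrightarrow> convex_on UNIV (\<lambda>y. f y s)"
    and "\<And>s. s \<in> S \<Longrightarrow> subdifferentiable_on (\<lambda>y. f y s) X"
    and "\<And>x s. x \<in> X \<Longrightarrow> s \<in> S \<Longrightarrow> convex_on X (fm x s)"
    and "\<And>x s. x \<in> X \<Longrightarrow> s \<in> S \<Longrightarrow> subdifferentiable_on (fm x s) X"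
    and "\<And>x s. x \<in> X \<Longrightarrow> s \<in> S \<Longrightarrow> fm x s x = f x s"
    and "\<And>x s y. x \<in> X \<Longrightarrow> s \<in> S \<Longrightarrow> fm x s y \<le> f y s"
    and "xk \<in> X" and "Sk \<in> S" and "\<alpha> > 0"
    and "xk1 \<in> X"
    and "\<And>z. z \<in> X \<Longrightarrow>
           fm xk Sk xk1 + (1 / (2 * \<alpha>)) * (norm (xk1 - xk))\<^sup>2
             \<le> fm xk Sk z + (1 / (2 * \<alpha>)) * (norm (z - xk))\<^sup>2"
  shows "\<exists>g. is_subgradient (\<lambda>y. f y Sk) xk g \<and> norm (xk - xk1) \<le> \<alpha> * norm g"
proof -
  obtain h where h: "is_subgradient (fm xk Sk) xk h"
    using assms(6)[OF assms(9,10)] assms(9) unfolding subdifferentiable_on_def by blast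
  have "is_subgradient (\<lambda>y. f y Sk) xk h"
    using is_subgradient_of_minorant[OF h, of "\<lambda>y. f y Sk"] assms(7,8)[OF assms(9,10)] by blast
  moreover have "norm (xk - xk1) \<le> \<alpha> * norm h"
    using prox_step_le_subgradient_norm[OF assms(2) assms(5)[OF assms(9,10)] assms(9,12,11) h]
      assms(13) by blast
  ultimately show ?thesis
    by blast
qed

end
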